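(* Let $I$ be a binary, friendship-uniform instance with common friendship value $\phi<1$ whose friendship graph $(N,F^* )$ has maximum degree $1$, and let $A$ be the (random) allocation output by FF-CT-RSD$^*$ on $I$ when all agents report their friendships truthfully and choose plots to maximize their utility. Then $\mathbb E(\mathrm{SW}(A))\ge\frac{\phi}{4\phi+4}\,\mathrm{OPT}(I)$.
   Context: Instance: agents $N$, $n=|N|$ plots $\mathcal V$, undirected plot graph $(\mathcal V,\mathcal E)$, binary valuations $u_i:\mathcal V\to\{0,1\}$, reciprocal friendship relation $F$ with $\phi_{i,j}=\phi>0$ for all $(i,j)\in F$; $F^*=\{\{i,j\}:(i,j)\in F\}$. For a bijection $A:N\to\mathcal V$, $U_i(A)=u_i(A(i))+\sum_{(i,j)\in F}\phi\,\mathbb I(\{A(i),A(j)\}\in\mathcal E)$, $\mathrm{SW}(A)=\sum_iU_i(A)$, $\mathrm{OPT}(I)=\max_A\mathrm{SW}(A)$. RSD$^*$: in each iteration, remaining agents report whether they value some available plot positively; if some do, one of them chosen uniformly at random picks a plot; otherwise remaining agents are arbitrarily paired with remaining plots and the procedure stops. FF-CT-RSD$^*$: each agent reports a friend (or none); let $P$ be the set of pairs $\{i,j\}$ who report each other. While some pair of adjacent plots is unoccupied and $P\ne\emptyset$, a uniformly random pair $\{i,j\}$ is removed from $P$ and $i,j$ pick plots consecutively in random order. Afterwards RSD$^*$ is run on the remaining agents and plots. Expectation is over the mechanism's randomness. *)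

theory Defs
  imports "HOL-Probability.Probability"
begin

text \<open>Instance: agents N, plots V (finite, card N = card V), plot graph given by a set E of
  two-element edges {x,y}, binary valuations u (u i v = True means value 1), friendship
  relation F with common value phi.\<close>

definition utility ::
  "('a \<Rightarrow> 'v \<Rightarrow> bool) \<Rightarrow> ('a \<times> 'a) set \<Rightarrow> 'v set set \<Rightarrow> real \<Rightarrow> ('a \<Rightarrow> 'v) \<Rightarrow> 'a \<Rightarrow> real" where
  "utility u F E \<phi> A i =
     of_bool (u i (A i)) + (\<Sum>j\<in>{j. (i, j) \<in> F}. \<phi> * of_bool ({A i, A j} \<in> E))"

definition SW ::
  "'a set \<Rightarrow> 'v set set \<Rightarrow> ('a \<Rightarrow> 'v \<Rightarrow> bool) \<Rightarrow> ('a \<times> 'a) set \<Rightarrow> real \<Rightarrow> ('a \<Rightarrow> 'v) \<Rightarrow> real" where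
  "SW N E u F \<phi> A = (\<Sum>i\<in>N. utility u F E \<phi> A i)"

definition OPT ::
  "'a set \<Rightarrow> 'v set \<Rightarrow> 'v set set \<Rightarrow> ('a \<Rightarrow> 'v \<Rightarrow> bool) \<Rightarrow> ('a \<times> 'a) set \<Rightarrow> real \<Rightarrow> real" where
  "OPT N V E u F \<phi> = Max (SW N E u F \<phi> ` {A. bij_betw A N V})"

text \<open>F* : the unordered friend pairs; with truthful reports these are exactly the mutually
  reporting pairs P.\<close>
definition friend_pairs :: "('a \<times> 'a) set \<Rightarrow> 'a set set" where
  "friend_pairs F = {{i, j} | i j. (i, j) \<in> F}"

text \<open>Second agent j of a pair, after its friend took plot v, picks w from the free set S
  maximizing its utility u_j(w) + phi * [w adjacent to v].\<close>
definition second_val ::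
  "('a \<Rightarrow> 'v \<Rightarrow> bool) \<Rightarrow> 'v set set \<Rightarrow> real \<Rightarrow> 'a \<Rightarrow> 'v \<Rightarrow> 'v \<Rightarrow> real" where
  "second_val u E \<phi> j v w = of_bool (u j w) + \<phi> * of_bool ({v, w} \<in> E)"

definition best_resp ::
  "('a \<Rightarrow> 'v \<Rightarrow> bool) \<Rightarrow> 'v set set \<Rightarrow> real \<Rightarrow> 'a \<Rightarrow> 'v \<Rightarrow> 'v set \<Rightarrow> 'v set" where
  "best_resp u E \<phi> j v S = {w \<in> S. \<forall>w'\<in>S. second_val u E \<phi> j v w' \<le> second_val u E \<phi> j v w}"

text \<open>First agent i of a pair (friend j) evaluates plot v from the free set S by the utility it
  obtains given that j then best-responds (for binary u and 0 < phi < 1, whether j's best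
  response is adjacent to v does not depend on tie-breaking).\<close>
definition first_val ::
  "('a \<Rightarrow> 'v \<Rightarrow> bool) \<Rightarrow> 'v set set \<Rightarrow> real \<Rightarrow> 'a \<Rightarrow> 'a \<Rightarrow> 'v \<Rightarrow> 'v set \<Rightarrow> real" where
  "first_val u E \<phi> i j v S =
     of_bool (u i v) + \<phi> * of_bool (\<forall>w\<in>best_resp u E \<phi> j v (S - {v}). {v, w} \<in> E)"

text \<open>RSD* on the remaining agents (N - dom pl) and plots (V - ran pl).
  rsd_out N V u pl p: p is a possible output distribution, for some resolution of the
  arbitrary choices (tie-breaking among utility-maximizing plots, final arbitrary pairing).\<close>
inductive rsd_out ::
  "'a set \<Rightarrow> 'v set \<Rightarrow> ('a \<Rightarrow> 'v \<Rightarrow> bool) \<Rightarrow> ('a \<rightharpoonup> 'v) \<Rightarrow> ('a \<Rightarrow> 'v) pmf \<Rightarrow> bool"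
  for N V u where
  rsd_pick:
    "{i \<in> N - dom pl. \<exists>v\<in>V - ran pl. u i v} \<noteq> {} \<Longrightarrow>
     (\<forall>i. i \<in> {i \<in> N - dom pl. \<exists>v\<in>V - ran pl. u i v} \<longrightarrow>
        (\<exists>v. v \<in> V - ran pl \<and> u i v \<and> rsd_out N V u (pl(i \<mapsto> v)) (Q i))) \<Longrightarrow>
     rsd_out N V u pl (bind_pmf (pmf_of_set {i \<in> N - dom pl. \<exists>v\<in>V - ran pl. u i v}) Q)"
| rsd_stop:
    "{i \<in> N - dom pl. \<exists>v\<in>V - ran pl. u i v} = {} \<Longrightarrow> bij_betw A N V \<Longrightarrow>
     (\<forall>i\<in>dom pl. pl i = Some (A i)) \<Longrightarrow> rsd_out N V u pl (return_pmf A)"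

text \<open>FF-CT-RSD*: state = partial allocation pl and remaining reported pairs P.
  A uniformly random ordered pair (i,j) with {i,j} in P (= uniform pair, uniform order) is
  drawn; i picks a free plot maximizing first_val, then j picks a best response.\<close>
inductive ff_out ::
  "'a set \<Rightarrow> 'v set \<Rightarrow> 'v set set \<Rightarrow> ('a \<Rightarrow> 'v \<Rightarrow> bool) \<Rightarrow> real \<Rightarrow>
   ('a \<rightharpoonup> 'v) \<Rightarrow> 'a set set \<Rightarrow> ('a \<Rightarrow> 'v) pmf \<Rightarrow> bool"
  for N V E u \<phi> where
  ff_pair:
    "P \<noteq> {} \<Longrightarrow> (\<exists>x y. {x, y} \<in> E \<and> x \<in> V - ran pl \<and> y \<in> V - ran pl) \<Longrightarrow>
     (\<forall>i j. {i, j} \<in> P \<longrightarrow>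
        (\<exists>v w. v \<in> V - ran pl \<and>
           (\<forall>v'\<in>V - ran pl. first_val u E \<phi> i j v' (V - ran pl) \<le> first_val u E \<phi> i j v (V - ran pl)) \<and>
           w \<in> best_resp u E \<phi> j v (V - ran pl - {v}) \<and>
           ff_out N V E u \<phi> (pl(i \<mapsto> v, j \<mapsto> w)) (P - {{i, j}}) (Q (i, j)))) \<Longrightarrow>
     ff_out N V E u \<phi> pl P (bind_pmf (pmf_of_set {(i, j). {i, j} \<in> P}) Q)"
| ff_rsd:
    "\<not> (P \<noteq> {} \<and> (\<exists>x y. {x, y} \<in> E \<and> x \<in> V - ran pl \<and> y \<in> V - ran pl)) \<Longrightarrow>
     rsd_out N V u pl p \<Longrightarrow> ff_out N V E u \<phi> pl P p"

end

theory Submission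
  imports Defs
begin

text \<open>
  The expected welfare is bounded below by a potential of the current partial allocation pl and
  of the set P of friend pairs still to be served: the welfare already realised among the placed
  agents, plus \<alpha> for each pending agent (unplaced, valuing its plot in an optimal allocation,
  which is still free), plus \<beta> min(|P|, \<nu>), where \<nu> is the matching number of the plot
  graph on the free plots. With \<alpha> = \<phi>/(4\<phi>+4) and \<beta> = 2\<phi>\<alpha> we have 4\<alpha> + 2\<beta> = \<phi>.

  Initially the potential is at least \<alpha> OPT, because the adjacent friend pairs of the optimal
  allocation are at most |F*| many and occupy a matching. At the end it is at most the welfare,
  because a pending agent would still have a valued free plot. In expectation it never decreases:
  an RSD pick gains 1 and loses at most 2 pending agents, and a pair pick loses at most
  4\<alpha> + 2\<beta> = \<phi>, which its gain covers unless the first agent values no free plot, its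
  friend values only the chosen plot v, and v is isolated among the free plots. In that case the
  loss is only \<phi>/2, and the reverse order of the same pair, equally likely, gains at least 1.
\<close>

lemma ex_maximizer:
  fixes f :: "'b \<Rightarrow> real"
  assumes "finite S" "S \<noteq> {}"
  shows "\<exists>x\<in>S. \<forall>y\<in>S. f y \<le> f x"
proof -
  have "Max (f ` S) \<in> f ` S"
    using assms by simp
  then obtain x where "x \<in> S" "f x = Max (f ` S)"
    by auto
  with assms(1) show ?thesis
    by (metis Max_ge finite_imageI image_eqI)
qed

section \<open>Uniform averages\<close>

lemma expectation_uniform_bind_ge_mean:
  fixes f :: "'b \<Rightarrow> real"
  assumes "finite X" "X \<noteq> {}" "\<And>x. x \<in> X \<Longrightarrow> finite (set_pmf (Q x))"
    and "real (card X) * T \<le> (\<Sum>x\<in>X. measure_pmf.expectation (Q x) f)"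
  shows "T \<le> measure_pmf.expectation (pmf_of_set X \<bind> Q) f"
proof -
  have "measure_pmf.expectation (pmf_of_set X \<bind> Q) f =
        (\<Sum>x\<in>X. measure_pmf.expectation (Q x) f) / real (card X)"
    using assms(1-3)
    by (simp add: pmf_expectation_bind_pmf_of_set sum_divide_distrib divide_inverse_commute sum_distrib_left)
  moreover have "0 < real (card X)"
    using assms(1,2) by (simp add: card_gt_0_iff)
  ultimately show ?thesis
    using assms(4) by (simp add: pos_le_divide_eq mult.commute)
qed

lemma expectation_uniform_bind_ge:
  fixes f :: "'b \<Rightarrow> real"
  assumes "finite X" "X \<noteq> {}" "\<And>x. x \<in> X \<Longrightarrow> finite (set_pmf (Q x))"
    and "\<And>x. x \<in> X \<Longrightarrow> T \<le> measure_pmf.expectation (Q x) f"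
  shows "T \<le> measure_pmf.expectation (pmf_of_set X \<bind> Q) f"
proof (rule expectation_uniform_bind_ge_mean[OF assms(1-3)])
  have "(\<Sum>x\<in>X. T) \<le> (\<Sum>x\<in>X. measure_pmf.expectation (Q x) f)"
    using assms(4) by (rule sum_mono)
  then show "real (card X) * T \<le> (\<Sum>x\<in>X. measure_pmf.expectation (Q x) f)"
    by simp
qed

lemma sum_ge_card_mult_by_swap:
  fixes g :: "'b \<times> 'b \<Rightarrow> real"
  assumes "finite X" "prod.swap ` X = X" "\<And>z. z \<in> X \<Longrightarrow> 2 * c \<le> g z + g (prod.swap z)"
  shows "real (card X) * c \<le> (\<Sum>z\<in>X. g z)"
proof -
  have "(\<Sum>z\<in>X. g (prod.swap z)) = (\<Sum>z\<in>X. g z)"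
    using sum.reindex[OF inj_swap, of g X] assms(2) by (simp add: comp_def)
  moreover have "(\<Sum>z\<in>X. 2 * c) \<le> (\<Sum>z\<in>X. g z + g (prod.swap z))"
    using assms(3) by (rule sum_mono)
  ultimately show ?thesis
    by (simp add: sum.distrib)
qed

lemma swap_image_doubleton_pairs:
  "prod.swap ` {(i, j). {i, j} \<in> P} = {(i, j). {i, j} \<in> P}"
  by (auto simp: image_iff insert_commute)

section \<open>Allocations\<close>

lemma SW_restrict:
  assumes "F \<subseteq> N \<times> N"
  shows "SW N E u F \<phi> A = SW N E u F \<phi> (restrict A N)"
proof -
  have "utility u F E \<phi> A i = utility u F E \<phi> (restrict A N) i" if "i \<in> N" for i
    unfolding utility_def using that assms by (auto intro!: sum.cong)
  then show ?thesis
    unfolding SW_def by (rule sum.cong[OF refl])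
qed

lemma OPT_attained:
  assumes "finite N" "finite V" "card N = card V" "F \<subseteq> N \<times> N"
  shows "\<exists>A. bij_betw A N V \<and> SW N E u F \<phi> A = OPT N V E u F \<phi>"
proof -
  let ?W = "SW N E u F \<phi> ` {A. bij_betw A N V}"
  obtain A where "bij_betw A N V"
    using finite_same_card_bij[OF assms(1-3)] by blast
  then have "?W \<noteq> {}" by blast
  moreover have "?W \<subseteq> SW N E u F \<phi> ` (N \<rightarrow>\<^sub>E V)"
  proof
    fix w assume "w \<in> ?W"
    then obtain A where "bij_betw A N V" "w = SW N E u F \<phi> A"
      by blast
    then have "restrict A N \<in> N \<rightarrow>\<^sub>E V" "w = SW N E u F \<phi> (restrict A N)"
      using SW_restrict[OF assms(4)] by (auto simp: restrict_PiE_iff dest: bij_betwE)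
    then show "w \<in> SW N E u F \<phi> ` (N \<rightarrow>\<^sub>E V)"
      by blast
  qed
  then have "finite ?W"
    by (rule finite_subset) (use assms(1,2) in \<open>intro finite_imageI finite_PiE\<close>)
  ultimately have "OPT N V E u F \<phi> \<in> ?W"
    unfolding OPT_def by (intro Max_in)
  then show ?thesis by auto
qed

lemma map_le_SomeD: "m \<subseteq>\<^sub>m m' \<Longrightarrow> m a = Some x \<Longrightarrow> m' a = Some x"
  unfolding map_le_def by (metis domI)

definition partial_alloc :: "'a set \<Rightarrow> 'v set \<Rightarrow> ('a \<rightharpoonup> 'v) \<Rightarrow> bool" where
  "partial_alloc N V pl \<longleftrightarrow> dom pl \<subseteq> N \<and> ran pl \<subseteq> V \<and> inj_on pl (dom pl)"

lemma partial_alloc_upd: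
  assumes "partial_alloc N V pl" "i \<in> N - dom pl" "v \<in> V - ran pl"
  shows "partial_alloc N V (pl(i \<mapsto> v))"
proof -
  have "inj_on (pl(i \<mapsto> v)) (dom pl)"
    using assms unfolding partial_alloc_def by (intro inj_on_fun_updI) (auto simp: ran_def)
  moreover have "Some v \<notin> (pl(i \<mapsto> v)) ` (dom pl - {i})"
    using assms(3) by (auto simp: ran_def)
  moreover have "ran (pl(i \<mapsto> v)) = insert v (ran pl)"
    using assms(2) by (simp add: domIff)
  ultimately show ?thesis
    using assms unfolding partial_alloc_def by (auto simp: insert_Diff_if)
qed

lemma partial_alloc_extends_to_bij:
  assumes "finite N" "finite V" "card N = card V" "partial_alloc N V pl"
  shows "\<exists>A. bij_betw A N V \<and> (\<forall>i\<in>dom pl. pl i = Some (A i))"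
proof -
  have sub: "dom pl \<subseteq> N" "ran pl \<subseteq> V" and inj: "inj_on pl (dom pl)"
    using assms(4) unfolding partial_alloc_def by auto
  have placed: "bij_betw (the \<circ> pl) (dom pl) (ran pl)"
  proof (rule bij_betw_imageI)
    show "inj_on (the \<circ> pl) (dom pl)"
    proof (rule inj_onI)
      fix a b assume ab: "a \<in> dom pl" "b \<in> dom pl" "(the \<circ> pl) a = (the \<circ> pl) b"
      then have "pl a = pl b"
        by (metis comp_apply domD option.sel)
      then show "a = b"
        using inj_onD[OF inj _ ab(1,2)] by blast
    qed
    show "(the \<circ> pl) ` dom pl = ran pl"
      unfolding ran_def by (auto simp: image_iff) (metis domI option.sel)
  qed
  moreover have "finite (dom pl)" "finite (ran pl)"
    using sub assms(1,2) by (auto intro: finite_subset)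
  ultimately have "card (N - dom pl) = card (V - ran pl)"
    using assms(3) sub by (simp add: card_Diff_subset bij_betw_same_card)
  then obtain g where g: "bij_betw g (N - dom pl) (V - ran pl)"
    using finite_same_card_bij[of "N - dom pl" "V - ran pl"] assms(1,2) by blast
  define A where "A a = (if a \<in> dom pl then the (pl a) else g a)" for a
  have "bij_betw A (dom pl) (ran pl)"
    using placed by (rule bij_betw_cong[THEN iffD1, rotated]) (simp add: A_def)
  moreover have "bij_betw A (N - dom pl) (V - ran pl)"
    using g by (rule bij_betw_cong[THEN iffD1, rotated]) (simp add: A_def)
  ultimately have "bij_betw A (dom pl \<union> (N - dom pl)) (ran pl \<union> (V - ran pl))"
    by (rule bij_betw_combine) blast
  moreover have "dom pl \<union> (N - dom pl) = N" "ran pl \<union> (V - ran pl) = V"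
    using sub by auto
  moreover have "pl i = Some (A i)" if "i \<in> dom pl" for i
    using that by (auto simp: A_def)
  ultimately show ?thesis
    by auto
qed

lemma rsd_out_finite_support:
  assumes "rsd_out N V u pl p" "finite N"
  shows "finite (set_pmf p)"
  using assms by (induction rule: rsd_out.induct) (auto simp: set_bind_pmf)

lemma rsd_out_exists:
  assumes "finite N" "finite V" "card N = card V" "partial_alloc N V pl"
  shows "\<exists>p. rsd_out N V u pl p"
  using assms(4)
proof (induction "card (N - dom pl)" arbitrary: pl rule: less_induct)
  case less
  define X where "X = {i \<in> N - dom pl. \<exists>v\<in>V - ran pl. u i v}"
  show ?case
  proof (cases "X = {}")
    case True
    with partial_alloc_extends_to_bij[OF assms(1-3) less.prems] show ?thesis
      unfolding X_def by (blast intro: rsd_stop)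
  next
    case False
    have "\<exists>q v. v \<in> V - ran pl \<and> u i v \<and> rsd_out N V u (pl(i \<mapsto> v)) q" if i: "i \<in> X" for i
    proof -
      obtain v where v: "v \<in> V - ran pl" "u i v"
        using i by (auto simp: X_def)
      have "card (N - dom (pl(i \<mapsto> v))) < card (N - dom pl)"
        using i assms(1) unfolding X_def by (intro psubset_card_mono) auto
      with less.hyps partial_alloc_upd[OF less.prems _ v(1)] i v show ?thesis
        unfolding X_def by blast
    qed
    then obtain Q where "\<forall>i\<in>X. \<exists>v. v \<in> V - ran pl \<and> u i v \<and> rsd_out N V u (pl(i \<mapsto> v)) (Q i)"
      by (metis bchoice)
    with False show ?thesis
      unfolding X_def by (blast intro: rsd_pick)
  qed
qed

section \<open>Matching number\<close>

definition matchings :: "'v set set \<Rightarrow> 'v set \<Rightarrow> 'v set set set" where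
  "matchings E S = {M. M \<subseteq> E \<and> \<Union>M \<subseteq> S \<and> disjoint M}"

definition matching_number :: "'v set set \<Rightarrow> 'v set \<Rightarrow> nat" where
  "matching_number E S = Max (card ` matchings E S)"

context
  fixes E :: "'v set set"
  assumes finite_E: "finite E"
begin

lemma finite_matchings: "finite (matchings E S)"
  using finite_E unfolding matchings_def by (auto intro: finite_subset[of _ "Pow E"])

lemma card_le_matching_number: "M \<in> matchings E S \<Longrightarrow> card M \<le> matching_number E S"
  unfolding matching_number_def using finite_matchings by auto

lemma matching_number_attained: "\<exists>M\<in>matchings E S. card M = matching_number E S"
proof -
  have "{} \<in> matchings E S"
    unfolding matchings_def by simp
  then have "matching_number E S \<in> card ` matchings E S"
    unfolding matching_number_def using finite_matchings by (intro Max_in) auto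
  then show ?thesis by auto
qed

lemma matching_number_eq_0:
  assumes "\<forall>e\<in>E. \<not> e \<subseteq> S"
  shows "matching_number E S = 0"
proof -
  obtain M where M: "M \<in> matchings E S" "card M = matching_number E S"
    using matching_number_attained by blast
  then have "M = {}"
    using assms unfolding matchings_def by blast
  with M(2) show ?thesis by simp
qed

lemma matching_number_remove:
  "matching_number E S \<le> matching_number E (S - {x}) + 1"
proof -
  obtain M where M: "M \<in> matchings E S" "card M = matching_number E S"
    using matching_number_attained by blast
  have "finite M"
    using M(1) finite_E unfolding matchings_def by (auto intro: finite_subset)
  have "{e \<in> M. x \<notin> e} \<in> matchings E (S - {x})"
    using M(1) unfolding matchings_def by (auto intro: pairwise_subset)
  then have "card {e \<in> M. x \<notin> e} \<le> matching_number E (S - {x})"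
    by (rule card_le_matching_number)
  moreover have "card {e \<in> M. x \<in> e} \<le> 1"
  proof -
    have "\<forall>e\<in>{e \<in> M. x \<in> e}. \<forall>e'\<in>{e \<in> M. x \<in> e}. e = e'"
      using M(1) unfolding matchings_def disjoint_def by blast
    with \<open>finite M\<close> show ?thesis
      by (simp add: card_le_Suc0_iff_eq)
  qed
  moreover have "M = {e \<in> M. x \<notin> e} \<union> {e \<in> M. x \<in> e}"
    by blast
  then have "card M \<le> card {e \<in> M. x \<notin> e} + card {e \<in> M. x \<in> e}"
    by (metis card_Un_le)
  ultimately show ?thesis
    using M(2) by linarith
qed

lemma matching_number_remove_isolated:
  assumes "\<forall>e\<in>E. e \<subseteq> S \<longrightarrow> x \<notin> e"
  shows "matching_number E S \<le> matching_number E (S - {x})"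
proof -
  obtain M where M: "M \<in> matchings E S" "card M = matching_number E S"
    using matching_number_attained by blast
  then have "M \<in> matchings E (S - {x})"
    using assms unfolding matchings_def by blast
  with M(2) show ?thesis
    by (metis card_le_matching_number)
qed

end

section \<open>Friendship structure\<close>

locale ff_instance =
  fixes N :: "'a set" and V :: "'v set" and E :: "'v set set"
    and u :: "'a \<Rightarrow> 'v \<Rightarrow> bool" and F :: "('a \<times> 'a) set" and \<phi> :: real
  assumes finite_N: "finite N" and finite_V: "finite V" and card_N_V: "card N = card V"
    and E_doubletons: "E \<subseteq> {{x, y} | x y. x \<in> V \<and> y \<in> V \<and> x \<noteq> y}"
    and F_sub: "F \<subseteq> N \<times> N" and sym_F: "sym F" and irrefl_F: "\<forall>i. (i, i) \<notin> F"
    and F_functional: "\<forall>i j k. (i, j) \<in> F \<longrightarrow> (i, k) \<in> F \<longrightarrow> j = k"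
    and \<phi>_pos: "0 < \<phi>" and \<phi>_lt_1: "\<phi> < 1"
begin

lemma finite_E: "finite E"
  by (rule finite_subset[of _ "Pow V"]) (use E_doubletons finite_V in auto)

lemma finite_F: "finite F"
  using F_sub finite_N by (auto intro: finite_subset)

lemma edge_cases: "e \<in> E \<Longrightarrow> \<exists>x y. e = {x, y} \<and> x \<in> V \<and> y \<in> V \<and> x \<noteq> y"
  using E_doubletons by blast

lemma singleton_not_edge: "{x} \<notin> E"
  using E_doubletons by (auto simp: doubleton_eq_iff)

lemma no_edge_within:
  assumes "\<not> (\<exists>x y. {x, y} \<in> E \<and> x \<in> S \<and> y \<in> S)"
  shows "\<forall>e\<in>E. \<not> e \<subseteq> S"
proof
  fix e assume "e \<in> E"
  then obtain x y where "e = {x, y}"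
    using edge_cases by blast
  with assms \<open>e \<in> E\<close> show "\<not> e \<subseteq> S"
    by auto
qed

lemma isolated_not_in_edge:
  assumes "\<forall>z\<in>S. {v, z} \<notin> E" "e \<in> E" "e \<subseteq> S"
  shows "v \<notin> e"
proof
  assume "v \<in> e"
  obtain x y where "e = {x, y}"
    using edge_cases assms(2) by blast
  with \<open>v \<in> e\<close> have "e = {v, y} \<or> e = {v, x}"
    by (auto simp: insert_commute)
  with assms \<open>e = {x, y}\<close> show False
    by auto
qed

lemma friendD:
  assumes "(i, j) \<in> F"
  shows "(j, i) \<in> F" "i \<noteq> j" "i \<in> N" "j \<in> N"
  using assms sym_F irrefl_F F_sub by (auto dest: symD)

lemma friend_pairs_memD:
  assumes "s \<in> friend_pairs F" "i \<in> s"
  shows "\<exists>j. s = {i, j} \<and> (i, j) \<in> F"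
  using assms friendD(1) unfolding friend_pairs_def by (auto simp: insert_commute)

lemma friend_pair_iff: "{i, j} \<in> friend_pairs F \<longleftrightarrow> (i, j) \<in> F"
proof
  assume "{i, j} \<in> friend_pairs F"
  then obtain j' where "{i, j} = {i, j'}" "(i, j') \<in> F"
    using friend_pairs_memD by blast
  then show "(i, j) \<in> F"
    using friendD(2) by (auto simp: doubleton_eq_iff)
qed (auto simp: friend_pairs_def)

lemma friend_pairs_disjoint: "disjoint (friend_pairs F)"
  unfolding disjoint_def
proof (intro ballI impI)
  fix s t assume st: "s \<in> friend_pairs F" "t \<in> friend_pairs F" "s \<noteq> t"
  show "s \<inter> t = {}"
  proof (rule ccontr)
    assume "s \<inter> t \<noteq> {}"
    then obtain x where "x \<in> s" "x \<in> t" by blast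
    with st(1,2) obtain y y' where "s = {x, y}" "(x, y) \<in> F" "t = {x, y'}" "(x, y') \<in> F"
      by (metis friend_pairs_memD)
    with st(3) F_functional show False by blast
  qed
qed

lemma finite_friend_pairs: "finite (friend_pairs F)"
  by (rule finite_subset[of _ "Pow N"]) (use F_sub finite_N in \<open>auto simp: friend_pairs_def\<close>)

lemma finite_ordered_pairs:
  assumes "P \<subseteq> friend_pairs F"
  shows "finite {(i, j). {i, j} \<in> P}"
proof -
  have "{(i, j). {i, j} \<in> P} \<subseteq> N \<times> N"
    using assms friendD(3,4) by (auto simp: friend_pair_iff[symmetric])
  then show ?thesis
    using finite_N by (auto intro: finite_subset)
qed

lemma ordered_pairs_nonempty:
  assumes "P \<subseteq> friend_pairs F" "P \<noteq> {}"
  shows "{(i, j). {i, j} \<in> P} \<noteq> {}"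
proof -
  obtain s where "s \<in> P"
    using assms(2) by blast
  with assms(1) obtain i j where "s = {i, j}"
    unfolding friend_pairs_def by blast
  with \<open>s \<in> P\<close> show ?thesis
    by blast
qed

lemma SW_eq:
  "SW N E u F \<phi> A = (\<Sum>i\<in>N. of_bool (u i (A i))) + \<phi> * card {(i, j) \<in> F. {A i, A j} \<in> E}"
proof -
  have "finite {j. (i, j) \<in> F}" for i
    using finite_imageI[OF finite_F, of snd] by (rule finite_subset[rotated]) force
  then have "(\<Sum>i\<in>N. \<Sum>j\<in>{j. (i, j) \<in> F}. \<phi> * of_bool ({A i, A j} \<in> E))
        = (\<Sum>(i, j)\<in>Sigma N (\<lambda>i. {j. (i, j) \<in> F}). \<phi> * of_bool ({A i, A j} \<in> E))"
    using finite_N by (intro sum.Sigma) auto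
  also have "Sigma N (\<lambda>i. {j. (i, j) \<in> F}) = F"
    using F_sub by auto
  also have "(\<Sum>(i, j)\<in>F. \<phi> * of_bool ({A i, A j} \<in> E)) = \<phi> * card {(i, j) \<in> F. {A i, A j} \<in> E}"
    using finite_F by (simp add: sum_distrib_left[symmetric] case_prod_beta Int_def split_def)
  finally show ?thesis
    unfolding SW_def utility_def sum.distrib by simp
qed

section \<open>The potential\<close>

definition \<alpha> :: real where "\<alpha> = \<phi> / (4 * \<phi> + 4)"

definition \<beta> :: real where "\<beta> = 2 * \<phi> * \<alpha>"

lemma weights: "4 * \<alpha> + 2 * \<beta> = \<phi>" "0 \<le> \<alpha>" "0 \<le> \<beta>" "2 * \<alpha> \<le> 1"
proof -
  have "4 * \<alpha> + 2 * \<beta> = \<alpha> * (4 * \<phi> + 4)"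
    unfolding \<beta>_def by (simp add: algebra_simps)
  also have "\<dots> = \<phi>"
    unfolding \<alpha>_def using \<phi>_pos by simp
  finally show "4 * \<alpha> + 2 * \<beta> = \<phi>" .
  show "0 \<le> \<alpha>" "0 \<le> \<beta>" "2 * \<alpha> \<le> 1"
    using \<phi>_pos \<phi>_lt_1 unfolding \<alpha>_def \<beta>_def by (auto simp: field_simps)
qed

definition placed_value :: "('a \<rightharpoonup> 'v) \<Rightarrow> real" where
  "placed_value pl = (\<Sum>a\<in>dom pl. of_bool (u a (the (pl a))))"

definition adjacent_pairs :: "('a \<rightharpoonup> 'v) \<Rightarrow> ('a \<times> 'a) set" where
  "adjacent_pairs pl = {(a, b) \<in> F. \<exists>x y. pl a = Some x \<and> pl b = Some y \<and> {x, y} \<in> E}"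

definition placed_welfare :: "('a \<rightharpoonup> 'v) \<Rightarrow> real" where
  "placed_welfare pl = placed_value pl + \<phi> * card (adjacent_pairs pl)"

lemma finite_adjacent_pairs: "finite (adjacent_pairs pl)"
  unfolding adjacent_pairs_def by (rule finite_subset[OF _ finite_F]) blast

lemma adjacent_pairs_mono: "pl \<subseteq>\<^sub>m pl' \<Longrightarrow> adjacent_pairs pl \<subseteq> adjacent_pairs pl'"
  unfolding adjacent_pairs_def by (blast dest: map_le_SomeD)

lemma placed_welfare_le_SW:
  assumes "dom pl \<subseteq> N" "\<forall>i\<in>dom pl. pl i = Some (A i)"
  shows "placed_welfare pl \<le> SW N E u F \<phi> A"
proof -
  have pl_A: "x = A a" if "pl a = Some x" for a x
    using assms(2) that by (metis domI option.inject)
  have "placed_value pl = (\<Sum>a\<in>dom pl. of_bool (u a (A a)))"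
    unfolding placed_value_def using pl_A by (intro sum.cong) (auto simp: domIff)
  also have "\<dots> \<le> (\<Sum>i\<in>N. of_bool (u i (A i)))"
    using assms(1) finite_N by (intro sum_mono2) auto
  finally have "placed_value pl \<le> (\<Sum>i\<in>N. of_bool (u i (A i)))" .
  moreover have "card (adjacent_pairs pl) \<le> card {(i, j) \<in> F. {A i, A j} \<in> E}"
  proof (rule card_mono)
    show "finite {(i, j) \<in> F. {A i, A j} \<in> E}"
      by (rule finite_subset[OF _ finite_F]) blast
    show "adjacent_pairs pl \<subseteq> {(i, j) \<in> F. {A i, A j} \<in> E}"
      unfolding adjacent_pairs_def by (auto dest: pl_A)
  qed
  ultimately show ?thesis
    unfolding placed_welfare_def SW_eq using \<phi>_pos by (simp add: add_mono)
qed

lemma placed_value_upd: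
  assumes "finite (dom pl)" "i \<notin> dom pl"
  shows "placed_value (pl(i \<mapsto> v)) = placed_value pl + of_bool (u i v)"
proof -
  have "placed_value (pl(i \<mapsto> v)) =
      of_bool (u i v) + (\<Sum>a\<in>dom pl. of_bool (u a (the ((pl(i \<mapsto> v)) a))))"
    unfolding placed_value_def using assms by (simp del: sum_of_bool_eq)
  also have "(\<Sum>a\<in>dom pl. of_bool (u a (the ((pl(i \<mapsto> v)) a)))) = placed_value pl"
    unfolding placed_value_def using assms(2) by (intro sum.cong) auto
  finally show ?thesis by linarith
qed

lemma placed_welfare_upd:
  assumes "dom pl \<subseteq> N" "i \<notin> dom pl"
  shows "placed_welfare pl + of_bool (u i v) \<le> placed_welfare (pl(i \<mapsto> v))"
proof -
  have "pl \<subseteq>\<^sub>m pl(i \<mapsto> v)"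
    using assms(2) by (auto simp: map_le_def)
  then have "card (adjacent_pairs pl) \<le> card (adjacent_pairs (pl(i \<mapsto> v)))"
    by (intro card_mono finite_adjacent_pairs adjacent_pairs_mono)
  then show ?thesis
    unfolding placed_welfare_def
    using placed_value_upd[OF finite_subset[OF assms(1) finite_N] assms(2)] \<phi>_pos by simp
qed

lemma card_adjacent_pairs_upd_pair:
  assumes "i \<notin> dom pl" "j \<notin> dom pl" "(i, j) \<in> F" "{v, w} \<in> E"
  shows "card (adjacent_pairs pl) + 2 \<le> card (adjacent_pairs (pl(i \<mapsto> v, j \<mapsto> w)))"
proof -
  let ?pl' = "pl(i \<mapsto> v, j \<mapsto> w)"
  have "i \<noteq> j" "(j, i) \<in> F"
    using friendD assms(3) by auto
  have "pl \<subseteq>\<^sub>m ?pl'"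
    using assms(1,2) by (auto simp: map_le_def)
  then have "adjacent_pairs pl \<subseteq> adjacent_pairs ?pl'"
    by (rule adjacent_pairs_mono)
  moreover have "(i, j) \<in> adjacent_pairs ?pl'" "(j, i) \<in> adjacent_pairs ?pl'"
    using assms(3,4) \<open>(j, i) \<in> F\<close> \<open>i \<noteq> j\<close> unfolding adjacent_pairs_def by (auto simp: insert_commute)
  ultimately have sub: "adjacent_pairs pl \<union> {(i, j), (j, i)} \<subseteq> adjacent_pairs ?pl'"
    by blast
  have "adjacent_pairs pl \<inter> {(i, j), (j, i)} = {}"
    using assms(1,2) unfolding adjacent_pairs_def by auto
  then have "card (adjacent_pairs pl \<union> {(i, j), (j, i)}) = card (adjacent_pairs pl) + 2"
    using \<open>i \<noteq> j\<close> by (simp add: card_Un_disjoint finite_adjacent_pairs)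
  with card_mono[OF finite_adjacent_pairs sub] show ?thesis
    by simp
qed

definition pair_gain :: "'a \<Rightarrow> 'a \<Rightarrow> 'v \<Rightarrow> 'v \<Rightarrow> real" where
  "pair_gain i j v w = of_bool (u i v) + of_bool (u j w) + 2 * \<phi> * of_bool ({v, w} \<in> E)"

lemma pair_gain_nonneg: "0 \<le> pair_gain i j v w"
  unfolding pair_gain_def using \<phi>_pos by simp

lemma placed_welfare_upd_pair:
  assumes "dom pl \<subseteq> N" "i \<notin> dom pl" "j \<notin> dom pl" "(i, j) \<in> F"
  shows "placed_welfare pl + pair_gain i j v w \<le> placed_welfare (pl(i \<mapsto> v, j \<mapsto> w))"
proof -
  let ?pl' = "pl(i \<mapsto> v, j \<mapsto> w)"
  have fin: "finite (dom pl)"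
    using assms(1) finite_N by (rule finite_subset)
  have "i \<noteq> j"
    using friendD assms(4) by auto
  then have "placed_value ?pl' = placed_value pl + of_bool (u i v) + of_bool (u j w)"
    using assms(2,3) fin by (simp add: placed_value_upd)
  moreover have adj: "card (adjacent_pairs pl) + 2 * of_bool ({v, w} \<in> E) \<le> card (adjacent_pairs ?pl')"
  proof (cases "{v, w} \<in> E")
    case True
    with card_adjacent_pairs_upd_pair[OF assms(2-4)] show ?thesis
      by simp
  next
    case False
    have "pl \<subseteq>\<^sub>m ?pl'"
      using assms(2,3) by (auto simp: map_le_def)
    with False show ?thesis
      by (simp add: card_mono[OF finite_adjacent_pairs adjacent_pairs_mono])
  qed
  then have "real (card (adjacent_pairs pl)) + 2 * of_bool ({v, w} \<in> E) \<le> card (adjacent_pairs ?pl')"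
    using of_nat_mono[where 'a = real, OF adj] by simp
  then have "\<phi> * (card (adjacent_pairs pl) + 2 * of_bool ({v, w} \<in> E)) \<le> \<phi> * card (adjacent_pairs ?pl')"
    using \<phi>_pos by (intro mult_left_mono) simp_all
  ultimately show ?thesis
    unfolding placed_welfare_def pair_gain_def by (simp add: algebra_simps)
qed

definition pair_budget :: "('a \<rightharpoonup> 'v) \<Rightarrow> 'a set set \<Rightarrow> nat" where
  "pair_budget pl P = min (card P) (matching_number E (V - ran pl))"

lemma pair_budget_step:
  assumes "i \<notin> dom pl" "j \<notin> dom pl" "i \<noteq> j" "{i, j} \<in> P" "finite P"
  shows "pair_budget pl P \<le> pair_budget (pl(i \<mapsto> v, j \<mapsto> w)) (P - {{i, j}}) + 2"
    and "\<forall>z\<in>V - ran pl. {v, z} \<notin> E \<Longrightarrow>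
      pair_budget pl P \<le> pair_budget (pl(i \<mapsto> v, j \<mapsto> w)) (P - {{i, j}}) + 1"
proof -
  let ?S = "V - ran pl"
  have free: "V - ran (pl(i \<mapsto> v, j \<mapsto> w)) = ?S - {v} - {w}"
    using assms(1-3) by auto
  have card_P: "card (P - {{i, j}}) + 1 = card P"
    using card_Suc_Diff1[OF assms(5,4)] by simp
  have w_removed: "matching_number E (?S - {v}) \<le> matching_number E (?S - {v} - {w}) + 1"
    by (rule matching_number_remove[OF finite_E])
  have "matching_number E ?S \<le> matching_number E (?S - {v}) + 1"
    by (rule matching_number_remove[OF finite_E])
  then show "pair_budget pl P \<le> pair_budget (pl(i \<mapsto> v, j \<mapsto> w)) (P - {{i, j}}) + 2"
    unfolding pair_budget_def free using w_removed card_P by linarith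
  assume "\<forall>z\<in>?S. {v, z} \<notin> E"
  then have "\<forall>e\<in>E. e \<subseteq> ?S \<longrightarrow> v \<notin> e"
    using isolated_not_in_edge by blast
  then have "matching_number E ?S \<le> matching_number E (?S - {v})"
    by (rule matching_number_remove_isolated[OF finite_E])
  then show "pair_budget pl P \<le> pair_budget (pl(i \<mapsto> v, j \<mapsto> w)) (P - {{i, j}}) + 1"
    unfolding pair_budget_def free using w_removed card_P by linarith
qed

definition pair_state :: "('a \<rightharpoonup> 'v) \<Rightarrow> 'a set set \<Rightarrow> bool" where
  "pair_state pl P \<longleftrightarrow>
     partial_alloc N V pl \<and> P \<subseteq> friend_pairs F \<and> (\<forall>s\<in>P. s \<inter> dom pl = {})"

lemma pair_state_initial: "pair_state Map.empty (friend_pairs F)"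
  unfolding pair_state_def partial_alloc_def by simp

lemma pair_stateD:
  assumes "pair_state pl P" "{i, j} \<in> P"
  shows "dom pl \<subseteq> N" "finite P" "i \<notin> dom pl" "j \<notin> dom pl" "(i, j) \<in> F"
proof -
  have disj: "\<forall>s\<in>P. s \<inter> dom pl = {}" and P: "P \<subseteq> friend_pairs F"
    using assms(1) unfolding pair_state_def by simp_all
  show "dom pl \<subseteq> N"
    using assms(1) unfolding pair_state_def partial_alloc_def by simp
  have "{i, j} \<inter> dom pl = {}"
    using disj assms(2) by (rule bspec)
  then show "i \<notin> dom pl" "j \<notin> dom pl"
    by auto
  show "finite P"
    using P finite_friend_pairs by (rule finite_subset)
  show "(i, j) \<in> F"
    using P assms(2) friend_pair_iff by blast
qed

lemma pair_state_step:
  assumes "pair_state pl P" "{i, j} \<in> P" "v \<in> V - ran pl" "w \<in> V - ran pl - {v}"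
  shows "pair_state (pl(i \<mapsto> v, j \<mapsto> w)) (P - {{i, j}})"
proof -
  note ij = pair_stateD[OF assms(1,2)]
  have "i \<in> N" "j \<in> N" "i \<noteq> j"
    using friendD[OF ij(5)] by auto
  have "partial_alloc N V (pl(i \<mapsto> v))"
    using assms(1,3) ij(3) \<open>i \<in> N\<close> unfolding pair_state_def by (simp add: partial_alloc_upd)
  moreover have "j \<in> N - dom (pl(i \<mapsto> v))" "w \<in> V - ran (pl(i \<mapsto> v))"
    using ij(3,4) \<open>j \<in> N\<close> \<open>i \<noteq> j\<close> assms(4) by (simp_all add: domIff)
  ultimately have "partial_alloc N V (pl(i \<mapsto> v, j \<mapsto> w))"
    by (rule partial_alloc_upd)
  moreover have "s \<inter> {i, j} = {}" if "s \<in> P - {{i, j}}" for s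
  proof -
    have "P \<subseteq> friend_pairs F"
      using assms(1) unfolding pair_state_def by simp
    then have "s \<in> friend_pairs F" "{i, j} \<in> friend_pairs F"
      using that assms(2) by auto
    moreover have "s \<noteq> {i, j}"
      using that by simp
    ultimately show ?thesis
      by (rule friend_pairs_disjoint[unfolded disjoint_def, rule_format])
  qed
  moreover have "dom (pl(i \<mapsto> v, j \<mapsto> w)) = {i, j} \<union> dom pl"
    by auto
  moreover have "P - {{i, j}} \<subseteq> friend_pairs F" "\<forall>s\<in>P. s \<inter> dom pl = {}"
    using assms(1) unfolding pair_state_def by auto
  ultimately show ?thesis
    unfolding pair_state_def by (auto simp: Int_Un_distrib)
qed

definition pair_pick :: "('a \<rightharpoonup> 'v) \<Rightarrow> 'a \<Rightarrow> 'a \<Rightarrow> 'v \<Rightarrow> 'v \<Rightarrow> bool" where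
  "pair_pick pl i j v w \<longleftrightarrow> v \<in> V - ran pl \<and>
     (\<forall>v'\<in>V - ran pl. first_val u E \<phi> i j v' (V - ran pl) \<le> first_val u E \<phi> i j v (V - ran pl)) \<and>
     w \<in> best_resp u E \<phi> j v (V - ran pl - {v})"

lemma pair_pick_free: "pair_pick pl i j v w \<Longrightarrow> v \<in> V - ran pl \<and> w \<in> V - ran pl - {v}"
  unfolding pair_pick_def best_resp_def by blast

lemma pair_pick_exists:
  assumes "{x, y} \<in> E" "x \<in> V - ran pl" "y \<in> V - ran pl"
  shows "\<exists>v w. pair_pick pl i j v w"
proof -
  let ?S = "V - ran pl"
  have "?S \<noteq> {}"
    using assms(2) by blast
  then obtain v where v: "v \<in> ?S" "\<forall>v'\<in>?S. first_val u E \<phi> i j v' ?S \<le> first_val u E \<phi> i j v ?S"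
    using ex_maximizer[where S = ?S and f = "\<lambda>v. first_val u E \<phi> i j v ?S"] finite_V by blast
  have "x \<noteq> y"
    using assms(1) singleton_not_edge by auto
  with assms(2,3) have "?S - {v} \<noteq> {}" by blast
  then obtain w where "w \<in> ?S - {v}" "\<forall>w'\<in>?S - {v}. second_val u E \<phi> j v w' \<le> second_val u E \<phi> j v w"
    using ex_maximizer[where S = "?S - {v}" and f = "second_val u E \<phi> j v"] finite_V by blast
  with v show ?thesis
    unfolding pair_pick_def best_resp_def by blast
qed

lemma low_gain_structure:
  assumes v_max: "\<forall>v'\<in>S. first_val u E \<phi> i j v' S \<le> first_val u E \<phi> i j v S"
    and w: "w \<in> best_resp u E \<phi> j v (S - {v})"
    and edge: "{x, y} \<in> E" "x \<in> S" "y \<in> S"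
    and low: "pair_gain i j v w < min 1 (2 * \<phi>)"
  shows "(\<forall>z\<in>S. \<not> u i z) \<and> (\<forall>z\<in>S. u j z \<longleftrightarrow> z = v) \<and> (\<forall>z\<in>S. {v, z} \<notin> E)"
proof -
  have "\<not> u i v" "\<not> u j w" "{v, w} \<notin> E"
    using low \<phi>_pos \<phi>_lt_1 unfolding pair_gain_def by (auto simp: of_bool_def split: if_splits)
  then have "second_val u E \<phi> j v w = 0"
    unfolding second_val_def by simp
  then have rest: "\<not> u j z \<and> {v, z} \<notin> E" if "z \<in> S - {v}" for z
    using w that \<phi>_pos unfolding best_resp_def second_val_def
    by (auto simp: of_bool_def split: if_splits)
  have isolated: "\<forall>z\<in>S. {v, z} \<notin> E"
  proof
    fix z assume "z \<in> S"
    show "{v, z} \<notin> E"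
    proof (cases "z = v")
      case True
      then show ?thesis
        using singleton_not_edge by simp
    qed (use rest \<open>z \<in> S\<close> in blast)
  qed
  have "first_val u E \<phi> i j v S = 0"
    using w \<open>{v, w} \<notin> E\<close> \<open>\<not> u i v\<close> unfolding first_val_def by auto
  then have first_le_0: "first_val u E \<phi> i j z S \<le> 0" if "z \<in> S" for z
    using v_max that by simp
  have i_values_none: "\<forall>z\<in>S. \<not> u i z"
  proof (intro ballI notI)
    fix z assume "z \<in> S" "u i z"
    then have "1 \<le> first_val u E \<phi> i j z S"
      using \<phi>_pos unfolding first_val_def by simp
    with first_le_0[OF \<open>z \<in> S\<close>] show False
      by simp
  qed
  txt \<open>j's best response to x is not adjacent to x, although y is: so j values it.\<close>
  from first_le_0[OF edge(2)] obtain w' where w': "w' \<in> best_resp u E \<phi> j x (S - {x})" "{x, w'} \<notin> E"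
    using \<phi>_pos unfolding first_val_def by (auto simp: of_bool_def split: if_splits)
  have "x \<noteq> y"
    using edge(1) singleton_not_edge by auto
  then have "w' \<in> S - {x}" "second_val u E \<phi> j x y \<le> second_val u E \<phi> j x w'"
    using w'(1) edge unfolding best_resp_def by auto
  then have "u j w'"
    using w'(2) edge(1) \<phi>_pos \<phi>_lt_1 unfolding second_val_def by (auto simp: of_bool_def split: if_splits)
  with rest \<open>w' \<in> S - {x}\<close> have "u j v" by blast
  with rest i_values_none isolated show ?thesis by blast
qed

lemma first_pick_unique_valued:
  assumes "v' \<in> S" "\<forall>z\<in>S. first_val u E \<phi> j i z S \<le> first_val u E \<phi> j i v' S"
    and "v \<in> S" "\<forall>z\<in>S. u j z \<longleftrightarrow> z = v"
  shows "v' = v"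
proof (rule ccontr)
  assume "v' \<noteq> v"
  then have "first_val u E \<phi> j i v' S \<le> \<phi>"
    using assms(1,4) \<phi>_pos unfolding first_val_def by simp
  moreover have "1 \<le> first_val u E \<phi> j i v S"
    using assms(3,4) \<phi>_pos unfolding first_val_def by simp
  ultimately show False
    using assms(2,3) \<phi>_lt_1 by fastforce
qed

lemma ff_out_finite_support:
  assumes "ff_out N V E u \<phi> pl P p" "P \<subseteq> friend_pairs F"
  shows "finite (set_pmf p)"
  using assms
proof (induction rule: ff_out.induct)
  case (ff_pair P pl Q)
  have "finite (set_pmf (Q (i, j)))" if "{i, j} \<in> P" for i j
  proof -
    have "P - {{i, j}} \<subseteq> friend_pairs F"
      using ff_pair.prems by blast
    then show ?thesis
      using ff_pair.IH that by blast
  qed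
  then show ?case
    using finite_ordered_pairs[OF ff_pair.prems] ordered_pairs_nonempty[OF ff_pair.prems ff_pair.hyps(1)]
    by (auto simp: set_bind_pmf)
next
  case (ff_rsd P pl p)
  then show ?case
    using rsd_out_finite_support[OF _ finite_N] by blast
qed

lemma ff_out_pairI:
  assumes "P \<noteq> {}" "{x, y} \<in> E" "x \<in> V - ran pl" "y \<in> V - ran pl"
    and "\<And>i j. {i, j} \<in> P \<Longrightarrow> \<exists>q v w. pair_pick pl i j v w \<and>
      ff_out N V E u \<phi> (pl(i \<mapsto> v, j \<mapsto> w)) (P - {{i, j}}) q"
  shows "\<exists>p. ff_out N V E u \<phi> pl P p"
proof -
  define X where "X = {(i, j). {i, j} \<in> P}"
  have "\<forall>z\<in>X. \<exists>q v w. pair_pick pl (fst z) (snd z) v w \<and>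
      ff_out N V E u \<phi> (pl(fst z \<mapsto> v, snd z \<mapsto> w)) (P - {{fst z, snd z}}) q"
    using assms(5) unfolding X_def by auto
  then obtain Q where Q: "\<forall>z\<in>X. \<exists>v w. pair_pick pl (fst z) (snd z) v w \<and>
      ff_out N V E u \<phi> (pl(fst z \<mapsto> v, snd z \<mapsto> w)) (P - {{fst z, snd z}}) (Q z)"
    by (metis bchoice)
  have "ff_out N V E u \<phi> pl P (pmf_of_set X \<bind> Q)"
    unfolding X_def
  proof (rule ff_pair)
    show "P \<noteq> {}" "\<exists>x y. {x, y} \<in> E \<and> x \<in> V - ran pl \<and> y \<in> V - ran pl"
      using assms(1-4) by blast+
    show "\<forall>i j. {i, j} \<in> P \<longrightarrow> (\<exists>v w. v \<in> V - ran pl \<and>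
        (\<forall>v'\<in>V - ran pl. first_val u E \<phi> i j v' (V - ran pl) \<le> first_val u E \<phi> i j v (V - ran pl)) \<and>
        w \<in> best_resp u E \<phi> j v (V - ran pl - {v}) \<and>
        ff_out N V E u \<phi> (pl(i \<mapsto> v, j \<mapsto> w)) (P - {{i, j}}) (Q (i, j)))"
      using Q unfolding X_def pair_pick_def by fastforce
  qed
  then show ?thesis ..
qed

lemma ff_out_exists:
  assumes "pair_state pl P"
  shows "\<exists>p. ff_out N V E u \<phi> pl P p"
  using assms
proof (induction "card P" arbitrary: pl P rule: less_induct)
  case less
  show ?case
  proof (cases "P \<noteq> {} \<and> (\<exists>x y. {x, y} \<in> E \<and> x \<in> V - ran pl \<and> y \<in> V - ran pl)")
    case False
    have "partial_alloc N V pl"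
      using less.prems unfolding pair_state_def by simp
    then obtain p where "rsd_out N V u pl p"
      using rsd_out_exists[OF finite_N finite_V card_N_V] by blast
    then show ?thesis
      using ff_rsd[OF False] by blast
  next
    case True
    then obtain x y where edge: "{x, y} \<in> E" "x \<in> V - ran pl" "y \<in> V - ran pl"
      by blast
    have "\<exists>q v w. pair_pick pl i j v w \<and> ff_out N V E u \<phi> (pl(i \<mapsto> v, j \<mapsto> w)) (P - {{i, j}}) q"
      if ij: "{i, j} \<in> P" for i j
    proof -
      obtain v w where pick: "pair_pick pl i j v w"
        using pair_pick_exists[OF edge] by blast
      have "card (P - {{i, j}}) < card P"
        using ij pair_stateD(2)[OF less.prems ij] by (rule card_Diff1_less[rotated])
      moreover have "pair_state (pl(i \<mapsto> v, j \<mapsto> w)) (P - {{i, j}})"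
        using pair_state_step[OF less.prems ij] pair_pick_free[OF pick] by blast
      ultimately obtain q where "ff_out N V E u \<phi> (pl(i \<mapsto> v, j \<mapsto> w)) (P - {{i, j}}) q"
        using less.hyps by blast
      with pick show ?thesis
        by blast
    qed
    with True edge show ?thesis
      by (intro ff_out_pairI) blast+
  qed
qed

end

locale ff_benchmark = ff_instance N V E u F \<phi>
  for N :: "'a set" and V :: "'v set" and E u F \<phi> +
  fixes Aopt :: "'a \<Rightarrow> 'v"
  assumes bij_Aopt: "bij_betw Aopt N V"
begin

definition pending :: "('a \<rightharpoonup> 'v) \<Rightarrow> 'a set" where
  "pending pl = {a \<in> N. a \<notin> dom pl \<and> Aopt a \<notin> ran pl \<and> u a (Aopt a)}"

definition potential :: "('a \<rightharpoonup> 'v) \<Rightarrow> 'a set set \<Rightarrow> real" where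
  "potential pl P = placed_welfare pl + \<alpha> * card (pending pl) + \<beta> * pair_budget pl P"

lemma card_pending_le:
  assumes "pending pl \<subseteq> pending pl' \<union> D \<union> {a \<in> N. Aopt a \<in> T}" "finite D" "finite T"
  shows "card (pending pl) \<le> card (pending pl') + card D + card T"
proof -
  have "card {a \<in> N. Aopt a \<in> T} \<le> card T"
  proof (rule card_inj_on_le[OF _ _ assms(3)])
    show "inj_on Aopt {a \<in> N. Aopt a \<in> T}"
      using bij_betw_imp_inj_on[OF bij_Aopt] by (rule inj_on_subset) auto
  qed auto
  moreover have "card (pending pl) \<le> card (pending pl' \<union> D \<union> {a \<in> N. Aopt a \<in> T})"
    using assms(1,2) finite_N by (intro card_mono) (auto simp: pending_def)
  moreover note card_Un_le[of "pending pl' \<union> D" "{a \<in> N. Aopt a \<in> T}"] card_Un_le[of "pending pl'" D]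
  ultimately show ?thesis by linarith
qed

lemma card_pending_upd:
  assumes "i \<notin> dom pl"
  shows "card (pending pl) \<le> card (pending (pl(i \<mapsto> v))) + 2"
proof -
  have "pending pl \<subseteq> pending (pl(i \<mapsto> v)) \<union> {i} \<union> {a \<in> N. Aopt a \<in> {v}}"
    using assms unfolding pending_def by auto
  then show ?thesis
    using card_pending_le[of pl _ "{i}" "{v}"] by simp
qed

lemma card_pending_upd_pair:
  assumes "i \<notin> dom pl" "j \<notin> dom pl" "i \<noteq> j"
  shows "card (pending pl) \<le> card (pending (pl(i \<mapsto> v, j \<mapsto> w))) + 4"
    and "\<forall>c\<in>{i, j}. \<forall>z\<in>V - ran pl. u c z \<longrightarrow> z \<in> {v, w} \<Longrightarrow>
      card (pending pl) \<le> card (pending (pl(i \<mapsto> v, j \<mapsto> w))) + 2"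
proof -
  have ran: "ran (pl(i \<mapsto> v, j \<mapsto> w)) = insert w (insert v (ran pl))"
    using assms by auto
  have "pending pl \<subseteq> pending (pl(i \<mapsto> v, j \<mapsto> w)) \<union> {i, j} \<union> {a \<in> N. Aopt a \<in> {v, w}}"
    unfolding pending_def ran by auto
  then have "card (pending pl) \<le> card (pending (pl(i \<mapsto> v, j \<mapsto> w))) + card {i, j} + card {v, w}"
    by (rule card_pending_le) simp_all
  moreover have "card {i, j} \<le> 2" "card {v, w} \<le> 2"
    by (simp_all add: card_insert_if)
  ultimately show "card (pending pl) \<le> card (pending (pl(i \<mapsto> v, j \<mapsto> w))) + 4"
    by linarith
  assume "\<forall>c\<in>{i, j}. \<forall>z\<in>V - ran pl. u c z \<longrightarrow> z \<in> {v, w}"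
  moreover have "Aopt a \<in> V" if "a \<in> N" for a
    using bij_betwE[OF bij_Aopt] that by blast
  ultimately have "pending pl \<subseteq> pending (pl(i \<mapsto> v, j \<mapsto> w)) \<union> {} \<union> {a \<in> N. Aopt a \<in> {v, w}}"
    unfolding pending_def ran by auto
  then have "card (pending pl) \<le> card (pending (pl(i \<mapsto> v, j \<mapsto> w))) + card {v, w}"
    using card_pending_le[of pl _ "{}" "{v, w}"] by simp
  with \<open>card {v, w} \<le> 2\<close> show "card (pending pl) \<le> card (pending (pl(i \<mapsto> v, j \<mapsto> w))) + 2"
    by linarith
qed

lemma potential_pair_step:
  assumes "pair_state pl P" "{i, j} \<in> P"
  shows "potential pl P + pair_gain i j v w - \<phi> \<le> potential (pl(i \<mapsto> v, j \<mapsto> w)) (P - {{i, j}})"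
    and "\<forall>c\<in>{i, j}. \<forall>z\<in>V - ran pl. u c z \<longrightarrow> z \<in> {v, w} \<Longrightarrow> \<forall>z\<in>V - ran pl. {v, z} \<notin> E \<Longrightarrow>
      potential pl P + pair_gain i j v w - \<phi> / 2 \<le> potential (pl(i \<mapsto> v, j \<mapsto> w)) (P - {{i, j}})"
proof -
  note ij = pair_stateD[OF assms]
  have "i \<noteq> j"
    using friendD(2)[OF ij(5)] .
  let ?pl' = "pl(i \<mapsto> v, j \<mapsto> w)" and ?P' = "P - {{i, j}}"
  have welfare: "placed_welfare pl + pair_gain i j v w \<le> placed_welfare ?pl'"
    by (rule placed_welfare_upd_pair[OF ij(1,3,4,5)])
  have "real (card (pending pl)) \<le> card (pending ?pl') + 4"
    "real (pair_budget pl P) \<le> pair_budget ?pl' ?P' + 2"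
    using card_pending_upd_pair(1)[OF ij(3,4) \<open>i \<noteq> j\<close>, of v w]
      pair_budget_step(1)[OF ij(3,4) \<open>i \<noteq> j\<close> assms(2) ij(2), of v w] by linarith+
  then have "\<alpha> * card (pending pl) \<le> \<alpha> * (card (pending ?pl') + 4)"
    "\<beta> * pair_budget pl P \<le> \<beta> * (pair_budget ?pl' ?P' + 2)"
    using weights(2,3) by (simp_all add: mult_left_mono)
  with welfare weights(1) show "potential pl P + pair_gain i j v w - \<phi> \<le> potential ?pl' ?P'"
    unfolding potential_def by (simp add: algebra_simps)
  assume "\<forall>c\<in>{i, j}. \<forall>z\<in>V - ran pl. u c z \<longrightarrow> z \<in> {v, w}" "\<forall>z\<in>V - ran pl. {v, z} \<notin> E"
  then have "real (card (pending pl)) \<le> card (pending ?pl') + 2"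
    "real (pair_budget pl P) \<le> pair_budget ?pl' ?P' + 1"
    using card_pending_upd_pair(2)[OF ij(3,4) \<open>i \<noteq> j\<close>, of v w]
      pair_budget_step(2)[OF ij(3,4) \<open>i \<noteq> j\<close> assms(2) ij(2), of v w] by linarith+
  then have "\<alpha> * card (pending pl) \<le> \<alpha> * (card (pending ?pl') + 2)"
    "\<beta> * pair_budget pl P \<le> \<beta> * (pair_budget ?pl' ?P' + 1)"
    using weights(2,3) by (simp_all add: mult_left_mono)
  with welfare weights(1) show "potential pl P + pair_gain i j v w - \<phi> / 2 \<le> potential ?pl' ?P'"
    unfolding potential_def by (simp add: algebra_simps)
qed

lemma potential_low_gain_order:
  assumes "pair_state pl P" "{i, j} \<in> P"
    and edge: "{x, y} \<in> E" "x \<in> V - ran pl" "y \<in> V - ran pl"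
    and pick: "pair_pick pl i j v w" and pick': "pair_pick pl j i v' w'"
    and low: "pair_gain i j v w < min 1 (2 * \<phi>)"
  shows "2 * potential pl P \<le>
    potential (pl(i \<mapsto> v, j \<mapsto> w)) (P - {{i, j}}) + potential (pl(j \<mapsto> v', i \<mapsto> w')) (P - {{j, i}})"
proof -
  let ?S = "V - ran pl"
  have rigid: "(\<forall>z\<in>?S. \<not> u i z) \<and> (\<forall>z\<in>?S. u j z \<longleftrightarrow> z = v) \<and> (\<forall>z\<in>?S. {v, z} \<notin> E)"
    using low_gain_structure[OF _ _ edge low] pick unfolding pair_pick_def by blast
  then have "v' = v"
    using first_pick_unique_valued[of v' ?S] pick pick' unfolding pair_pick_def by blast
  then have "1 \<le> pair_gain j i v' w'"
    using rigid pick \<phi>_pos unfolding pair_pick_def pair_gain_def by auto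
  moreover have "potential pl P + pair_gain i j v w - \<phi> / 2 \<le> potential (pl(i \<mapsto> v, j \<mapsto> w)) (P - {{i, j}})"
    by (rule potential_pair_step(2)[OF assms(1,2)]) (use rigid in auto)
  moreover have "{j, i} \<in> P"
    using assms(2) by (simp add: insert_commute)
  then have "potential pl P + pair_gain j i v' w' - \<phi> / 2 \<le> potential (pl(j \<mapsto> v', i \<mapsto> w')) (P - {{j, i}})"
    by (rule potential_pair_step(2)[OF assms(1)]) (use rigid \<open>v' = v\<close> in auto)
  ultimately show ?thesis
    using pair_gain_nonneg[of i j v w] \<phi>_lt_1 by linarith
qed

lemma potential_both_orders:
  assumes "pair_state pl P" "{i, j} \<in> P"
    and edge: "{x, y} \<in> E" "x \<in> V - ran pl" "y \<in> V - ran pl"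
    and pick: "pair_pick pl i j v w" and pick': "pair_pick pl j i v' w'"
  shows "2 * potential pl P \<le>
    potential (pl(i \<mapsto> v, j \<mapsto> w)) (P - {{i, j}}) + potential (pl(j \<mapsto> v', i \<mapsto> w')) (P - {{j, i}})"
proof -
  have ji: "{j, i} \<in> P"
    using assms(2) by (simp add: insert_commute)
  consider "pair_gain i j v w < min 1 (2 * \<phi>)" | "pair_gain j i v' w' < min 1 (2 * \<phi>)"
    | "\<phi> \<le> pair_gain i j v w" "\<phi> \<le> pair_gain j i v' w'"
    using \<phi>_pos \<phi>_lt_1 by linarith
  then show ?thesis
  proof cases
    case 1
    then show ?thesis
      using potential_low_gain_order[OF assms(1,2) edge pick pick'] by blast
  next
    case 2
    then show ?thesis
      using potential_low_gain_order[OF assms(1) ji edge pick' pick] by linarith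
  next
    case 3
    then show ?thesis
      using potential_pair_step(1)[OF assms(1,2), of v w] potential_pair_step(1)[OF assms(1) ji, of v' w']
      by linarith
  qed
qed

lemma rsd_out_expectation_ge:
  assumes "rsd_out N V u pl p" "dom pl \<subseteq> N"
  shows "placed_welfare pl + \<alpha> * card (pending pl) \<le> measure_pmf.expectation p (SW N E u F \<phi>)"
  using assms
proof (induction rule: rsd_out.induct)
  case (rsd_pick pl Q)
  define X where "X = {i \<in> N - dom pl. \<exists>v\<in>V - ran pl. u i v}"
  have pick: "\<exists>v. v \<in> V - ran pl \<and> u i v \<and> rsd_out N V u (pl(i \<mapsto> v)) (Q i) \<and>
      (dom (pl(i \<mapsto> v)) \<subseteq> N \<longrightarrow> placed_welfare (pl(i \<mapsto> v)) + \<alpha> * card (pending (pl(i \<mapsto> v)))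
        \<le> measure_pmf.expectation (Q i) (SW N E u F \<phi>))" if "i \<in> X" for i
    using rsd_pick.IH that unfolding X_def by blast
  have "finite X"
    using finite_N unfolding X_def by simp
  moreover have "X \<noteq> {}"
    using rsd_pick.hyps(1) unfolding X_def .
  moreover have "finite (set_pmf (Q i))" if "i \<in> X" for i
    using pick[OF that] rsd_out_finite_support[OF _ finite_N] by blast
  moreover have "placed_welfare pl + \<alpha> * card (pending pl) \<le> measure_pmf.expectation (Q i) (SW N E u F \<phi>)"
    if i: "i \<in> X" for i
  proof -
    have "i \<in> N" "i \<notin> dom pl"
      using i by (simp_all add: X_def)
    obtain v where v: "u i v"
      and IH: "dom (pl(i \<mapsto> v)) \<subseteq> N \<longrightarrow> placed_welfare (pl(i \<mapsto> v)) + \<alpha> * card (pending (pl(i \<mapsto> v)))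
        \<le> measure_pmf.expectation (Q i) (SW N E u F \<phi>)"
      using pick[OF i] by blast
    have "dom (pl(i \<mapsto> v)) \<subseteq> N"
      using rsd_pick.prems \<open>i \<in> N\<close> by simp
    with IH have IH': "placed_welfare (pl(i \<mapsto> v)) + \<alpha> * card (pending (pl(i \<mapsto> v)))
        \<le> measure_pmf.expectation (Q i) (SW N E u F \<phi>)" ..
    have "placed_welfare pl + 1 \<le> placed_welfare (pl(i \<mapsto> v))"
      using placed_welfare_upd[OF rsd_pick.prems \<open>i \<notin> dom pl\<close>, of v] v by simp
    moreover have pending: "real (card (pending pl)) \<le> card (pending (pl(i \<mapsto> v))) + 2"
      using of_nat_mono[where 'a = real, OF card_pending_upd[OF \<open>i \<notin> dom pl\<close>, of v]] by simp
    then have "\<alpha> * card (pending pl) \<le> \<alpha> * card (pending (pl(i \<mapsto> v))) + 2 * \<alpha>"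
      using mult_left_mono[OF pending weights(2)] by (simp add: algebra_simps)
    ultimately show ?thesis
      using IH' weights(4) by linarith
  qed
  ultimately show ?case
    unfolding X_def[symmetric] by (rule expectation_uniform_bind_ge)
next
  case (rsd_stop pl A)
  have "Aopt a \<in> V" if "a \<in> N" for a
    using bij_betwE[OF bij_Aopt] that by blast
  then have "pending pl = {}"
    using rsd_stop.hyps(1) unfolding pending_def by auto
  then show ?case
    using placed_welfare_le_SW[OF rsd_stop.prems rsd_stop.hyps(3)] by simp
qed

lemma potential_le_pair_round:
  assumes "pair_state pl P" "P \<noteq> {}" and edge: "{x, y} \<in> E" "x \<in> V - ran pl" "y \<in> V - ran pl"
    and pick: "\<And>i j. {i, j} \<in> P \<Longrightarrow> \<exists>v w. pair_pick pl i j v w \<and>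
      potential (pl(i \<mapsto> v, j \<mapsto> w)) (P - {{i, j}}) \<le> measure_pmf.expectation (Q (i, j)) f \<and>
      finite (set_pmf (Q (i, j)))"
  shows "potential pl P \<le> measure_pmf.expectation (pmf_of_set {(i, j). {i, j} \<in> P} \<bind> Q) f"
proof -
  define X where "X = {(i, j). {i, j} \<in> P}"
  let ?e = "\<lambda>z. measure_pmf.expectation (Q z) f"
  have P_sub: "P \<subseteq> friend_pairs F"
    using assms(1) unfolding pair_state_def by blast
  have X: "finite X" "X \<noteq> {}" "prod.swap ` X = X"
    using finite_ordered_pairs[OF P_sub] ordered_pairs_nonempty[OF P_sub assms(2)]
      swap_image_doubleton_pairs
    unfolding X_def by simp_all
  have "2 * potential pl P \<le> ?e z + ?e (prod.swap z)" if z: "z \<in> X" for z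
  proof -
    obtain i j where z: "z = (i, j)" "{i, j} \<in> P"
      using z unfolding X_def by blast
    then have ji: "{j, i} \<in> P"
      by (simp add: insert_commute)
    obtain v w where vw: "pair_pick pl i j v w" "potential (pl(i \<mapsto> v, j \<mapsto> w)) (P - {{i, j}}) \<le> ?e (i, j)"
      using pick[OF z(2)] by blast
    obtain v' w' where vw': "pair_pick pl j i v' w'" "potential (pl(j \<mapsto> v', i \<mapsto> w')) (P - {{j, i}}) \<le> ?e (j, i)"
      using pick[OF ji] by blast
    have "2 * potential pl P \<le>
        potential (pl(i \<mapsto> v, j \<mapsto> w)) (P - {{i, j}}) + potential (pl(j \<mapsto> v', i \<mapsto> w')) (P - {{j, i}})"
      by (rule potential_both_orders[OF assms(1) z(2) edge vw(1) vw'(1)])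
    with vw(2) vw'(2) z(1) show ?thesis
      by simp
  qed
  then have sum: "real (card X) * potential pl P \<le> (\<Sum>z\<in>X. ?e z)"
    by (rule sum_ge_card_mult_by_swap[OF X(1,3)])
  have support: "finite (set_pmf (Q z))" if "z \<in> X" for z
    using pick that unfolding X_def by blast
  show ?thesis
    unfolding X_def[symmetric] by (rule expectation_uniform_bind_ge_mean[OF X(1,2) support sum])
qed

lemma ff_out_expectation_ge:
  assumes "ff_out N V E u \<phi> pl P p" "pair_state pl P"
  shows "potential pl P \<le> measure_pmf.expectation p (SW N E u F \<phi>)"
  using assms
proof (induction rule: ff_out.induct)
  case (ff_pair P pl Q)
  obtain x y where edge: "{x, y} \<in> E" "x \<in> V - ran pl" "y \<in> V - ran pl"
    using ff_pair.hyps(2) by blast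
  show ?case
  proof (rule potential_le_pair_round[OF ff_pair.prems ff_pair.hyps(1) edge])
    fix i j assume ij: "{i, j} \<in> P"
    from ff_pair.IH ij obtain v w where pick: "pair_pick pl i j v w"
      and out: "ff_out N V E u \<phi> (pl(i \<mapsto> v, j \<mapsto> w)) (P - {{i, j}}) (Q (i, j))"
      and IH: "pair_state (pl(i \<mapsto> v, j \<mapsto> w)) (P - {{i, j}}) \<longrightarrow>
        potential (pl(i \<mapsto> v, j \<mapsto> w)) (P - {{i, j}}) \<le> measure_pmf.expectation (Q (i, j)) (SW N E u F \<phi>)"
      unfolding pair_pick_def by blast
    have "pair_state (pl(i \<mapsto> v, j \<mapsto> w)) (P - {{i, j}})"
      using pair_state_step[OF ff_pair.prems ij] pair_pick_free[OF pick] by blast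
    moreover from this have "finite (set_pmf (Q (i, j)))"
      using ff_out_finite_support[OF out] unfolding pair_state_def by blast
    ultimately show "\<exists>v w. pair_pick pl i j v w \<and>
        potential (pl(i \<mapsto> v, j \<mapsto> w)) (P - {{i, j}}) \<le> measure_pmf.expectation (Q (i, j)) (SW N E u F \<phi>) \<and>
        finite (set_pmf (Q (i, j)))"
      using pick IH by blast
  qed
next
  case (ff_rsd P pl p)
  have "pair_budget pl P = 0"
  proof (cases "P = {}")
    case False
    with ff_rsd.hyps(1) have "\<forall>e\<in>E. \<not> e \<subseteq> V - ran pl"
      by (intro no_edge_within) blast
    then show ?thesis
      unfolding pair_budget_def using matching_number_eq_0[OF finite_E] by simp
  qed (simp add: pair_budget_def)
  then show ?case
    using rsd_out_expectation_ge[OF ff_rsd.hyps(2)] ff_rsd.prems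
    unfolding potential_def pair_state_def partial_alloc_def by simp
qed

lemma card_adjacent_friends_le:
  "card {(i, j) \<in> F. {Aopt i, Aopt j} \<in> E} \<le> 2 * card {s \<in> friend_pairs F. Aopt ` s \<in> E}"
proof -
  let ?Fa = "{(i, j) \<in> F. {Aopt i, Aopt j} \<in> E}" and ?Pa = "{s \<in> friend_pairs F. Aopt ` s \<in> E}"
  have fin_Pa: "finite ?Pa"
    using finite_friend_pairs by simp
  have pair: "finite s" "card s \<le> 2" if "s \<in> ?Pa" for s
    using that by (auto simp: friend_pairs_def card_insert_if)
  have "inj_on fst F"
    using F_functional by (auto simp: inj_on_def)
  then have "inj_on fst ?Fa"
    by (rule inj_on_subset) auto
  then have "card ?Fa = card (fst ` ?Fa)"
    by (rule card_image[symmetric])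
  also have "fst ` ?Fa \<subseteq> \<Union>?Pa"
  proof
    fix i assume "i \<in> fst ` ?Fa"
    then obtain j where "(i, j) \<in> F" "{Aopt i, Aopt j} \<in> E"
      by auto
    then have "{i, j} \<in> ?Pa"
      by (simp add: friend_pair_iff)
    then show "i \<in> \<Union>?Pa"
      by blast
  qed
  then have "card (fst ` ?Fa) \<le> card (\<Union>?Pa)"
    using fin_Pa pair(1) by (intro card_mono) auto
  also have "\<dots> \<le> (\<Sum>s\<in>?Pa. card s)"
    by (rule card_Union_le_sum_card)
  also have "\<dots> \<le> (\<Sum>s\<in>?Pa. 2)"
    using pair(2) by (rule sum_mono)
  finally show ?thesis
    by simp
qed

lemma card_adjacent_pairs_le_budget:
  "card {s \<in> friend_pairs F. Aopt ` s \<in> E} \<le> pair_budget Map.empty (friend_pairs F)"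
proof -
  let ?Pa = "{s \<in> friend_pairs F. Aopt ` s \<in> E}"
  have "\<Union>(friend_pairs F) \<subseteq> N"
    using F_sub by (auto simp: friend_pairs_def)
  then have inj: "inj_on Aopt (\<Union>?Pa)"
    using bij_betw_imp_inj_on[OF bij_Aopt] by (auto intro: inj_on_subset)
  have "(\<lambda>s. Aopt ` s) ` ?Pa \<in> matchings E V"
    unfolding matchings_def
    using \<open>\<Union>(friend_pairs F) \<subseteq> N\<close> bij_betwE[OF bij_Aopt]
      disjoint_image[OF inj pairwise_subset[OF friend_pairs_disjoint]]
    by auto
  then have "card ((\<lambda>s. Aopt ` s) ` ?Pa) \<le> matching_number E V"
    by (rule card_le_matching_number[OF finite_E])
  moreover have "card ((\<lambda>s. Aopt ` s) ` ?Pa) = card ?Pa"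
    using inj_on_image[OF inj] by (rule card_image)
  moreover have "card ?Pa \<le> card (friend_pairs F)"
    using finite_friend_pairs by (intro card_mono) auto
  ultimately show ?thesis
    unfolding pair_budget_def by simp
qed

lemma potential_initial: "\<alpha> * SW N E u F \<phi> Aopt \<le> potential Map.empty (friend_pairs F)"
proof -
  have "placed_welfare Map.empty = 0"
    unfolding placed_welfare_def placed_value_def adjacent_pairs_def by simp
  moreover have "pending Map.empty = {a \<in> N. u a (Aopt a)}"
    unfolding pending_def by simp
  moreover have "SW N E u F \<phi> Aopt = card {a \<in> N. u a (Aopt a)} + \<phi> * card {(i, j) \<in> F. {Aopt i, Aopt j} \<in> E}"
    unfolding SW_eq using finite_N by (simp add: Int_def)
  moreover have "\<alpha> * \<phi> * card {(i, j) \<in> F. {Aopt i, Aopt j} \<in> E}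
      \<le> \<alpha> * \<phi> * (2 * pair_budget Map.empty (friend_pairs F))"
    using card_adjacent_friends_le card_adjacent_pairs_le_budget weights(2) \<phi>_pos
    by (intro mult_left_mono) simp_all
  ultimately show ?thesis
    unfolding potential_def \<beta>_def by (simp add: algebra_simps)
qed

end

theorem theoremA1:
  fixes N :: "'a set" and V :: "'v set" and E :: "'v set set"
    and u :: "'a \<Rightarrow> 'v \<Rightarrow> bool" and F :: "('a \<times> 'a) set" and \<phi> :: real
  assumes "finite N" and "finite V" and "card N = card V"
    and "E \<subseteq> {{x, y} | x y. x \<in> V \<and> y \<in> V \<and> x \<noteq> y}"
    and "F \<subseteq> N \<times> N" and "sym F" and "\<forall>i. (i, i) \<notin> F"
    and "\<forall>i j k. (i, j) \<in> F \<longrightarrow> (i, k) \<in> F \<longrightarrow> j = k"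
    and "F \<noteq> {}"
    and "0 < \<phi>" and "\<phi> < 1"
  shows "(\<exists>p. ff_out N V E u \<phi> Map.empty (friend_pairs F) p) \<and>
         (\<forall>p. ff_out N V E u \<phi> Map.empty (friend_pairs F) p \<longrightarrow>
            measure_pmf.expectation p (SW N E u F \<phi>) \<ge> \<phi> / (4 * \<phi> + 4) * OPT N V E u F \<phi>)"
proof -
  obtain Aopt where Aopt: "bij_betw Aopt N V" "SW N E u F \<phi> Aopt = OPT N V E u F \<phi>"
    using OPT_attained[OF assms(1-3,5)] by blast
  interpret ff_benchmark N V E u F \<phi> Aopt
    using assms Aopt(1) by unfold_locales auto
  have "\<phi> / (4 * \<phi> + 4) * OPT N V E u F \<phi> \<le> potential Map.empty (friend_pairs F)"
    using potential_initial Aopt(2) by (simp add: \<alpha>_def)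
  then show ?thesis
    using ff_out_exists[OF pair_state_initial] ff_out_expectation_ge[OF _ pair_state_initial]
    by fastforce
qed

end
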